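(* Suppose $1<R\le n$ and let $\ell_2=\min\{n,\lfloor n/R\rfloor\}$. Then for every bid set $B_{\mathcal D}$ of $\mathcal D$ (a multiset of $n$ nonnegative reals with sum $\beta$), $$W(\pi_{\rm unif},B_{\mathcal D})\ge f(\ell_2).$$
   Context: Position-randomized auction with two bidders $\mathcal A$ and $\mathcal D$ and $n\ge1$ objects. $\mathcal D$ has budget $\beta>0$ and $\mathcal A$ has budget $R\beta$ with $R>0$. A bidding algorithm of a bidder is a pair $(\pi,B)$: $B$ (the bid set) is a multiset of $n$ nonnegative reals whose sum is at most the bidder's budget, and $\pi$ is a randomized algorithm permuting sequences of length $n$. Applying $\pi$ to a listing of $B$ gives the final bid sequence, whose $i$-th entry is the bid on object $i$. The two bidders' permutations are independent. Each object goes to the higher bid; on a tie each bidder wins it with probability $1/2$. $w(\pi_{\mathcal A},\pi_{\mathcal D},B_{\mathcal A},B_{\mathcal D})$ is the expected number of objects won by $\mathcal A$. $W(\pi_{\mathcal D},B_{\mathcal D})$ is its supremum over all bidding algorithms $(\pi_{\mathcal A},B_{\mathcal A})$ of $\mathcal A$. $\pi_{\rm unif}$ applies a uniformly random permutation. For $x,y>0$, $\mathrm{less}(x,y)=y(\lceil x/y\rceil-1)$. For $\ell=1,\dots,n$, let $R_\ell=\mathrm{less}(R,\frac2{\ell(\ell+1)})$ and $f(\ell)=n-\ell+\frac{\ell(\ell+1)R_\ell}{2n}$. *)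

theory Defs
  imports "HOL-Probability.Probability" "HOL-Combinatorics.Permutations"
begin

definition is_perm_alg :: "(real list \<Rightarrow> real list pmf) \<Rightarrow> bool" where
  "is_perm_alg \<pi> \<longleftrightarrow> (\<forall>xs. \<forall>ys \<in> set_pmf (\<pi> xs). mset ys = mset xs)"

definition is_bid_set :: "nat \<Rightarrow> real \<Rightarrow> real multiset \<Rightarrow> bool" where
  "is_bid_set n b B \<longleftrightarrow> size B = n \<and> (\<forall>x \<in># B. 0 \<le> x) \<and> sum_mset B \<le> b"

definition is_bidding_alg :: "nat \<Rightarrow> real \<Rightarrow> (real list \<Rightarrow> real list pmf) \<Rightarrow> real multiset \<Rightarrow> bool" where
  "is_bidding_alg n b \<pi> B \<longleftrightarrow> is_perm_alg \<pi> \<and> is_bid_set n b B"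

definition pi_unif :: "real list \<Rightarrow> real list pmf" where
  "pi_unif xs = map_pmf (\<lambda>\<sigma>. permute_list \<sigma> xs)
      (pmf_of_set {\<sigma>. \<sigma> permutes {..<length xs}})"

definition win_A :: "real \<Rightarrow> real \<Rightarrow> real" where
  "win_A a d = (if a > d then 1 else if a = d then 1/2 else 0)"

definition w :: "nat \<Rightarrow> (real list \<Rightarrow> real list pmf) \<Rightarrow> (real list \<Rightarrow> real list pmf)
                 \<Rightarrow> real multiset \<Rightarrow> real multiset \<Rightarrow> real" where
  "w n \<pi>A \<pi>D BA BD =
     measure_pmf.expectation
       (pair_pmf (\<pi>A (sorted_list_of_multiset BA)) (\<pi>D (sorted_list_of_multiset BD)))
       (\<lambda>(a, d). \<Sum>i<n. win_A (a ! i) (d ! i))"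

definition W :: "nat \<Rightarrow> real \<Rightarrow> real \<Rightarrow> (real list \<Rightarrow> real list pmf) \<Rightarrow> real multiset \<Rightarrow> real" where
  "W n R \<beta> \<pi>D BD =
     (SUP p \<in> {(\<pi>A, BA). is_bidding_alg n (R * \<beta>) \<pi>A BA}. w n (fst p) \<pi>D (snd p) BD)"

definition less :: "real \<Rightarrow> real \<Rightarrow> real" where
  "less x y = y * (of_int \<lceil>x / y\<rceil> - 1)"

definition R_l :: "real \<Rightarrow> nat \<Rightarrow> real" where
  "R_l R l = less R (2 / (real l * (real l + 1)))"

definition f_val :: "nat \<Rightarrow> real \<Rightarrow> nat \<Rightarrow> real" where
  "f_val n R l = real n - real l + real l * (real l + 1) * R_l R l / (2 * real n)"

end

theory Submission
  imports Defs
begin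

(* Against a uniformly permuted bid vector, every fixed bid a of A meets a uniformly
   random bid of D, so any admissible bid multiset of A played in a fixed order gives
   W >= (1/n) * sum over pairs (a, d) of win_A a d.
   List D's bids decreasingly as e 0 >= ... >= e (n - 1) and let l = floor (n / R).
   A bid just above e (l - c) beats n - l + c of D's bids.  If N k of A's bids are at
   level k or higher (k < l), the whole bid vector costs
   n * e l + sum_{k<l} N k * (e k - e (k + 1)); for the fractional staircase
   N k = r * (k + 1) this is at most r * sum_{k<=l} e k + (n - r * (l + 1)) * e l <= r * beta
   whenever n <= r * (l + 1).  Rounding the staircase to integers with total
   m = ceiling (R * l * (l + 1) / 2) - 1 without raising the cost (the rounded-up
   entries go where e k - e (k + 1) is smallest) yields n * (n - l) + m wins within
   budget R * beta, i.e. W >= f l. *)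

section \<open>Reduction to a fixed bid vector\<close>

lemma sum_mset_mset_eq_sum_nth:
  "(\<Sum>x\<in>#mset xs. h x) = (\<Sum>i<length xs. (h (xs ! i) :: 'b::comm_monoid_add))"
  by (simp flip: mset_map add: sum_mset_sum_list sum_list_sum_nth atLeast0LessThan)

lemma obtain_antimono_enumeration:
  fixes B :: "'a::linorder multiset"
  obtains e where "mset (map e [0..<size B]) = B" "\<And>i j. i \<le> j \<Longrightarrow> j < size B \<Longrightarrow> e j \<le> e i"
proof
  let ?xs = "rev (sorted_list_of_multiset B)"
  have len: "length ?xs = size B"
    by (metis length_rev mset_sorted_list_of_multiset size_mset)
  show "mset (map ((!) ?xs) [0..<size B]) = B"
    by (metis len map_nth mset_rev mset_sorted_list_of_multiset)
  have "sorted_wrt (\<ge>) ?xs"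
    by (simp add: sorted_wrt_rev)
  then show "?xs ! j \<le> ?xs ! i" if "i \<le> j" "j < size B" for i j
    using that len by (metis antisym_conv2 order_refl sorted_wrt_nth_less)
qed

lemma card_times_sum_permutes_apply:
  fixes g :: "'a \<Rightarrow> 'b::comm_semiring_1"
  assumes "finite S" "i \<in> S"
  shows "of_nat (card S) * (\<Sum>\<sigma> | \<sigma> permutes S. g (\<sigma> i))
       = of_nat (card {\<sigma>. \<sigma> permutes S}) * sum g S"
proof -
  let ?P = "{\<sigma>. \<sigma> permutes S}"
  have shift: "(\<Sum>\<sigma>\<in>?P. g (\<sigma> i)) = (\<Sum>\<sigma>\<in>?P. g (\<sigma> j))" if "j \<in> S" for j
  proof -
    have "Transposition.transpose i j permutes S"
      using assms(2) that by (simp add: permutes_swap_id)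
    then have "(\<Sum>\<sigma>\<in>?P. g (\<sigma> i)) = (\<Sum>\<sigma>\<in>?P. g ((\<sigma> \<circ> Transposition.transpose i j) i))"
      by (rule sum_permutations_compose_right)
    then show ?thesis by simp
  qed
  have "of_nat (card S) * (\<Sum>\<sigma>\<in>?P. g (\<sigma> i)) = (\<Sum>j\<in>S. \<Sum>\<sigma>\<in>?P. g (\<sigma> i))"
    by simp
  also have "\<dots> = (\<Sum>j\<in>S. \<Sum>\<sigma>\<in>?P. g (\<sigma> j))"
    by (rule sum.cong[OF refl shift])
  also have "\<dots> = (\<Sum>\<sigma>\<in>?P. \<Sum>j\<in>S. g (\<sigma> j))"
    by (rule sum.swap)
  also have "\<dots> = (\<Sum>\<sigma>\<in>?P. sum g S)"
  proof (rule sum.cong[OF refl])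
    fix \<sigma> assume "\<sigma> \<in> ?P"
    then show "(\<Sum>j\<in>S. g (\<sigma> j)) = sum g S"
      using sum.permute[of \<sigma> S g] by (simp add: comp_def)
  qed
  finally show ?thesis
    by simp
qed

lemma w_return_pi_unif:
  assumes "size BA = n" "size BD = n"
  shows "real n * w n return_pmf pi_unif BA BD = (\<Sum>a\<in>#BA. \<Sum>d\<in>#BD. win_A a d)"
proof -
  define as where "as = sorted_list_of_multiset BA"
  define ds where "ds = sorted_list_of_multiset BD"
  let ?P = "{\<sigma>. \<sigma> permutes {..<n}}"
  let ?g = "\<lambda>i k. win_A (as ! i) (ds ! k)"
  have len: "length as = n" "length ds = n"
    using assms unfolding as_def ds_def by (metis mset_sorted_list_of_multiset size_mset)+
  have P: "finite ?P" "?P \<noteq> {}"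
    by (auto simp: finite_permutations intro: permutes_id)
  have "w n return_pmf pi_unif BA BD
      = (\<Sum>\<sigma>\<in>?P. \<Sum>i<n. win_A (as ! i) (permute_list \<sigma> ds ! i)) / card ?P"
    unfolding w_def pair_return_pmf1 pi_unif_def as_def[symmetric] ds_def[symmetric] len
    using P by (simp add: integral_pmf_of_set)
  also have "\<dots> = (\<Sum>\<sigma>\<in>?P. \<Sum>i<n. ?g i (\<sigma> i)) / card ?P"
    using len by (simp add: permute_list_nth)
  finally have w_eq: "w n return_pmf pi_unif BA BD = (\<Sum>i<n. \<Sum>\<sigma>\<in>?P. ?g i (\<sigma> i)) / card ?P"
    by (simp add: sum.swap[of _ ?P])
  have "real n * (\<Sum>\<sigma>\<in>?P. ?g i (\<sigma> i)) = card ?P * (\<Sum>k<n. ?g i k)" if "i < n" for i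
    using card_times_sum_permutes_apply[where S="{..<n}" and i=i and g="?g i"] that by simp
  then have "real n * (\<Sum>i<n. \<Sum>\<sigma>\<in>?P. ?g i (\<sigma> i)) = card ?P * (\<Sum>i<n. \<Sum>k<n. ?g i k)"
    by (simp add: sum_distrib_left)
  moreover have "(\<Sum>i<n. \<Sum>k<n. ?g i k) = (\<Sum>a\<in>#BA. \<Sum>d\<in>#BD. win_A a d)"
  proof -
    have "(\<Sum>a\<in>#BA. H a) = (\<Sum>i<n. H (as ! i))" "(\<Sum>d\<in>#BD. H d) = (\<Sum>k<n. H (ds ! k))"
      for H :: "real \<Rightarrow> real"
      using sum_mset_mset_eq_sum_nth[of H] len unfolding as_def ds_def
      by (metis mset_sorted_list_of_multiset)+
    then show ?thesis
      by simp
  qed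
  ultimately show ?thesis
    using P by (simp add: w_eq)
qed

lemma w_le: "w n \<pi>A \<pi>D BA BD \<le> real n"
proof -
  have "\<bar>\<Sum>i<n. win_A (as ! i) (ds ! i)\<bar> \<le> real n" for as ds
  proof -
    have "0 \<le> (\<Sum>i<n. win_A (as ! i) (ds ! i))" "(\<Sum>i<n. win_A (as ! i) (ds ! i)) \<le> (\<Sum>i<n. 1)"
      by (intro sum_nonneg sum_mono; simp add: win_A_def)+
    then show ?thesis
      by simp
  qed
  then show ?thesis
    unfolding w_def
    by (intro measure_pmf.integral_le_const measure_pmf.integrable_const_bound[where B="real n"])
       (auto simp: abs_le_iff split: prod.splits)
qed

lemma w_le_W:
  assumes "is_bidding_alg n (R * \<beta>) \<pi>A BA"
  shows "w n \<pi>A \<pi>D BA BD \<le> W n R \<beta> \<pi>D BD"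
  unfolding W_def
  using assms by (intro cSUP_upper2[where x="(\<pi>A, BA)"] bdd_aboveI[where M="real n"]) (auto simp: w_le)

lemma W_pi_unif_ge_bid_vector:
  assumes BD: "mset (map e [0..<n]) = BD"
    and nonneg: "\<And>j. j < n \<Longrightarrow> 0 \<le> a j" and budget: "(\<Sum>j<n. a j) \<le> R * \<beta>"
  shows "(\<Sum>j<n. \<Sum>k<n. win_A (a j) (e k)) \<le> real n * W n R \<beta> pi_unif BD"
proof -
  define BA where "BA = mset (map a [0..<n])"
  have sum_BA: "(\<Sum>x\<in>#BA. h x) = (\<Sum>j<n. h (a j))" for h :: "real \<Rightarrow> real"
    using sum_mset_mset_eq_sum_nth[of h "map a [0..<n]"] unfolding BA_def by simp
  have sum_BD: "(\<Sum>x\<in>#BD. h x) = (\<Sum>k<n. h (e k))" for h :: "real \<Rightarrow> real"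
    using sum_mset_mset_eq_sum_nth[of h "map e [0..<n]"] BD by simp
  have "size BA = n" "size BD = n"
    unfolding BA_def BD[symmetric] by simp_all
  have "is_bidding_alg n (R * \<beta>) return_pmf BA"
    unfolding is_bidding_alg_def is_perm_alg_def is_bid_set_def
    using sum_BA[of "\<lambda>x. x"] nonneg budget by (auto simp: BA_def)
  then have "w n return_pmf pi_unif BA BD \<le> W n R \<beta> pi_unif BD"
    by (rule w_le_W)
  moreover have "real n * w n return_pmf pi_unif BA BD = (\<Sum>j<n. \<Sum>k<n. win_A (a j) (e k))"
    using w_return_pi_unif[OF \<open>size BA = n\<close> \<open>size BD = n\<close>] sum_BA sum_BD by simp
  ultimately show ?thesis
    by (metis mult_left_mono of_nat_0_le_iff)
qed

section \<open>Rounding a fractional staircase\<close>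

lemma exists_lower_subset:
  fixes g :: "'a \<Rightarrow> 'b::linorder"
  assumes "finite S" "K \<le> card S"
  shows "\<exists>U\<subseteq>S. card U = K \<and> (\<forall>h\<in>U. \<forall>h'\<in>S - U. g h \<le> g h')"
  using assms(2)
proof (induction K)
  case 0
  show ?case
    by (intro exI[of _ "{}"]) simp
next
  case (Suc K)
  then obtain U where U: "U \<subseteq> S" "card U = K" "\<forall>h\<in>U. \<forall>h'\<in>S - U. g h \<le> g h'"
    by auto
  have "finite U"
    using U(1) assms(1) finite_subset by blast
  then have "S - U \<noteq> {}"
    using Suc.prems U(1,2) by (metis Diff_eq_empty_iff card_mono not_less_eq_eq subset_antisym)
  then obtain h0 where h0: "h0 \<in> S - U" "\<forall>h'\<in>S - U. g h0 \<le> g h'"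
    using assms(1) by (metis arg_min_if_finite(1,2) finite_Diff not_le)
  show ?case
  proof (intro exI[of _ "insert h0 U"] conjI ballI)
    show "insert h0 U \<subseteq> S" "card (insert h0 U) = Suc K"
      using h0(1) U(1,2) \<open>finite U\<close> by auto
    show "g h \<le> g h'" if "h \<in> insert h0 U" "h' \<in> S - insert h0 U" for h h'
      using that h0(2) U(3) by auto
  qed
qed

lemma exists_subset_sum_le_weighted:
  fixes \<phi> g :: "'a \<Rightarrow> real"
  assumes "finite S" and \<phi>: "\<And>h. h \<in> S \<Longrightarrow> 0 \<le> \<phi> h \<and> \<phi> h \<le> 1"
    and g_nonneg: "\<And>h. h \<in> S \<Longrightarrow> 0 \<le> g h" and K: "real K \<le> (\<Sum>h\<in>S. \<phi> h)"
  obtains U where "U \<subseteq> S" "card U = K" "(\<Sum>h\<in>U. g h) \<le> (\<Sum>h\<in>S. \<phi> h * g h)"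
proof -
  have "(\<Sum>h\<in>S. \<phi> h) \<le> card S"
    using \<phi> sum_mono[of S \<phi> "\<lambda>_. 1"] by simp
  then obtain U where U: "U \<subseteq> S" "card U = K" and lower: "\<forall>h\<in>U. \<forall>h'\<in>S - U. g h \<le> g h'"
    using exists_lower_subset[OF \<open>finite S\<close>, of K g] K by auto
  have "finite U"
    using U(1) \<open>finite S\<close> finite_subset by blast
  have split: "(\<Sum>h\<in>S. f h) = (\<Sum>h\<in>U. f h) + (\<Sum>h\<in>S - U. f h)" for f :: "'a \<Rightarrow> real"
    using \<open>finite S\<close> U(1) by (metis add.commute sum.subset_diff)
  have "(\<Sum>h\<in>U. g h) \<le> (\<Sum>h\<in>S. \<phi> h * g h)"
  proof (cases "U = {}")
    case True
    then show ?thesis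
      using g_nonneg \<phi> by (simp add: sum_nonneg)
  next
    case False
    define t where "t = Max (g ` U)"
    have below: "g h \<le> t" if "h \<in> U" for h
      unfolding t_def using \<open>finite U\<close> that by simp
    have above: "t \<le> g h'" if "h' \<in> S - U" for h'
      unfolding t_def using \<open>finite U\<close> False lower that by (simp add: Max_le_iff)
    have "0 \<le> t"
      using below g_nonneg U(1) False by fastforce
    have "(\<Sum>h\<in>U. (1 - \<phi> h) * g h) \<le> (\<Sum>h\<in>U. (1 - \<phi> h) * t)"
      using U(1) \<phi> below by (intro sum_mono mult_left_mono) auto
    also have "\<dots> = (K - (\<Sum>h\<in>U. \<phi> h)) * t"
      using U(2) by (simp add: sum_subtractf sum_distrib_right left_diff_distrib)
    also have "\<dots> \<le> (\<Sum>h\<in>S - U. \<phi> h) * t"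
      using split[of \<phi>] K \<open>0 \<le> t\<close> by (intro mult_right_mono) auto
    also have "\<dots> \<le> (\<Sum>h\<in>S - U. \<phi> h * g h)"
      unfolding sum_distrib_right using \<phi> above by (intro sum_mono mult_left_mono) auto
    finally have "(\<Sum>h\<in>U. (1 - \<phi> h) * g h) \<le> (\<Sum>h\<in>S - U. \<phi> h * g h)" .
    then show ?thesis
      using split[of "\<lambda>h. \<phi> h * g h"] by (simp add: algebra_simps sum.distrib sum_subtractf)
  qed
  with U show ?thesis
    using that by blast
qed

(* Each N k is ceiling (x k) - 1 or ceiling (x k); the units that restore the total m
   are put on the indices of smallest weight g. *)
lemma exists_rounding_sum_le:
  fixes x g :: "'a \<Rightarrow> real" and m :: nat
  assumes "finite I" and pos: "\<And>k. k \<in> I \<Longrightarrow> 0 < x k" and g_nonneg: "\<And>k. k \<in> I \<Longrightarrow> 0 \<le> g k"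
    and m: "real m \<le> (\<Sum>k\<in>I. x k)" "(\<Sum>k\<in>I. x k) < real m + 1"
  obtains N :: "'a \<Rightarrow> nat" where "\<And>k. k \<in> I \<Longrightarrow> x k - 1 \<le> real (N k) \<and> real (N k) < x k + 1"
    "(\<Sum>k\<in>I. N k) = m" "(\<Sum>k\<in>I. real (N k) * g k) \<le> (\<Sum>k\<in>I. x k * g k)"
proof -
  define fl where "fl k = nat (\<lceil>x k\<rceil> - 1)" for k
  define \<phi> where "\<phi> k = x k - real (fl k)" for k
  have fl: "real (fl k) = of_int \<lceil>x k\<rceil> - 1" if "k \<in> I" for k
    using pos[OF that] by (simp add: fl_def)
  have \<phi>: "0 \<le> \<phi> k \<and> \<phi> k \<le> 1" if "k \<in> I" for k
    using fl[OF that] ceiling_correct[of "x k"] unfolding \<phi>_def by linarith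
  have sum_x: "(\<Sum>k\<in>I. x k) = real (\<Sum>k\<in>I. fl k) + (\<Sum>k\<in>I. \<phi> k)"
    unfolding \<phi>_def by (simp add: sum_subtractf)
  have "0 \<le> (\<Sum>k\<in>I. \<phi> k)"
    using \<phi> by (simp add: sum_nonneg)
  then have "(\<Sum>k\<in>I. fl k) \<le> m"
    using sum_x m(2) by linarith
  define K where "K = m - (\<Sum>k\<in>I. fl k)"
  have K: "real K \<le> (\<Sum>k\<in>I. \<phi> k)"
    unfolding K_def using sum_x m(1) \<open>(\<Sum>k\<in>I. fl k) \<le> m\<close> by (simp add: of_nat_diff)
  obtain U where U: "U \<subseteq> I" "card U = K" and cost: "(\<Sum>k\<in>U. g k) \<le> (\<Sum>k\<in>I. \<phi> k * g k)"
    by (rule exists_subset_sum_le_weighted[OF \<open>finite I\<close> \<phi> g_nonneg K])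
  define N where "N k = fl k + (if k \<in> U then 1 else 0)" for k
  have sum_U: "(\<Sum>k\<in>I. if k \<in> U then f k else 0) = (\<Sum>k\<in>U. f k)" for f :: "'a \<Rightarrow> 'b::comm_monoid_add"
  proof -
    have "{k \<in> I. k \<in> U} = U"
      using U(1) by auto
    then show ?thesis
      using sum.inter_filter[OF \<open>finite I\<close>, of f "\<lambda>k. k \<in> U"] by simp
  qed
  show ?thesis
  proof
    show "x k - 1 \<le> real (N k) \<and> real (N k) < x k + 1" if "k \<in> I" for k
    proof -
      have "real (fl k) \<le> real (N k)" "real (N k) \<le> real (fl k) + 1"
        unfolding N_def by auto
      then show ?thesis
        using fl[OF that] ceiling_correct[of "x k"] by linarith
    qed
    show "(\<Sum>k\<in>I. N k) = m"
      unfolding N_def sum.distrib sum_U using U(2) \<open>(\<Sum>k\<in>I. fl k) \<le> m\<close> by (simp add: K_def)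
    have "(\<Sum>k\<in>I. real (N k) * g k) = (\<Sum>k\<in>I. real (fl k) * g k) + (\<Sum>k\<in>U. g k)"
    proof -
      have "real (N k) * g k = real (fl k) * g k + (if k \<in> U then g k else 0)" for k
        unfolding N_def by (simp add: algebra_simps)
      then show ?thesis
        by (simp add: sum.distrib sum_U)
    qed
    also have "\<dots> \<le> (\<Sum>k\<in>I. real (fl k) * g k) + (\<Sum>k\<in>I. \<phi> k * g k)"
      using cost by simp
    also have "\<dots> = (\<Sum>k\<in>I. x k * g k)"
      unfolding \<phi>_def by (simp add: algebra_simps sum.distrib[symmetric])
    finally show "(\<Sum>k\<in>I. real (N k) * g k) \<le> (\<Sum>k\<in>I. x k * g k)" .
  qed
qed

lemma exists_staircase_profile:
  fixes r :: real and \<delta> :: "nat \<Rightarrow> real" and l m :: nat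
  assumes "1 \<le> r" and m: "real m \<le> r * (\<Sum>k<l. real (Suc k))" "r * (\<Sum>k<l. real (Suc k)) < real m + 1"
    and \<delta>_nonneg: "\<And>k. k < l \<Longrightarrow> 0 \<le> \<delta> k"
  obtains N :: "nat \<Rightarrow> nat" where "\<And>i j. i \<le> j \<Longrightarrow> j < l \<Longrightarrow> N i \<le> N j"
    "\<And>k. k < l \<Longrightarrow> real (N k) < r * real (Suc k) + 1" "(\<Sum>k<l. N k) = m"
    "(\<Sum>k<l. real (N k) * \<delta> k) \<le> r * (\<Sum>k<l. real (Suc k) * \<delta> k)"
proof -
  define x where "x k = r * real (Suc k)" for k
  have "0 < x k" for k
    unfolding x_def using \<open>1 \<le> r\<close> by simp
  moreover have "(\<Sum>k<l. x k) = r * (\<Sum>k<l. real (Suc k))"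
    unfolding x_def by (simp add: sum_distrib_left)
  ultimately obtain N where N: "\<And>k. k < l \<Longrightarrow> x k - 1 \<le> real (N k) \<and> real (N k) < x k + 1"
    and sum_N: "(\<Sum>k<l. N k) = m" and cost_N: "(\<Sum>k<l. real (N k) * \<delta> k) \<le> (\<Sum>k<l. x k * \<delta> k)"
    using exists_rounding_sum_le[of "{..<l}" x \<delta> m] m \<delta>_nonneg by auto
  show ?thesis
  proof
    show "N i \<le> N j" if "i \<le> j" "j < l" for i j
    proof (cases "i = j")
      case False
      then have "real (Suc i) \<le> real j"
        using that by simp
      then have "r * real (Suc i) \<le> r * real j"
        using \<open>1 \<le> r\<close> by (intro mult_left_mono) auto
      then have "x i + 1 \<le> x j"
        using \<open>1 \<le> r\<close> unfolding x_def by (simp add: algebra_simps)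
      then show ?thesis
        using N[of i] N[of j] that by simp
    qed simp
    show "real (N k) < r * real (Suc k) + 1" if "k < l" for k
      using N[OF that] unfolding x_def by simp
    show "(\<Sum>k<l. N k) = m"
      by (rule sum_N)
    show "(\<Sum>k<l. real (N k) * \<delta> k) \<le> r * (\<Sum>k<l. real (Suc k) * \<delta> k)"
      using cost_N unfolding x_def by (simp add: sum_distrib_left mult.assoc)
  qed
qed

section \<open>Winning bid vectors within budget\<close>

lemma win_count_above:
  fixes e :: "nat \<Rightarrow> real"
  assumes antimono: "\<And>i j. i \<le> j \<Longrightarrow> j < n \<Longrightarrow> e j \<le> e i" and "e p < b"
  shows "real (n - p) \<le> (\<Sum>k<n. win_A b (e k))"
proof -
  have "(\<Sum>k\<in>{p..<n}. win_A b (e k)) = (\<Sum>k\<in>{p..<n}. 1)"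
  proof (rule sum.cong[OF refl])
    fix k assume "k \<in> {p..<n}"
    then have "e k < b" using antimono[of p k] \<open>e p < b\<close> by simp
    then show "win_A b (e k) = 1" by (simp add: win_A_def)
  qed
  moreover have "(\<Sum>k\<in>{p..<n}. win_A b (e k)) \<le> (\<Sum>k<n. win_A b (e k))"
    by (intro sum_mono2) (auto simp: win_A_def)
  ultimately show ?thesis
    by simp
qed

lemma sum_sum_filter_less_swap:
  fixes g :: "'a \<Rightarrow> 'b::comm_semiring_1"
  assumes "finite K" "\<And>k. k \<in> K \<Longrightarrow> N k \<le> n"
  shows "(\<Sum>j<n. \<Sum>k\<in>{k\<in>K. j < N k}. g k) = (\<Sum>k\<in>K. of_nat (N k) * g k)"
proof -
  have "(\<Sum>j<n. \<Sum>k\<in>{k\<in>K. j < N k}. g k) = (\<Sum>k\<in>K. \<Sum>j<n. if j < N k then g k else 0)"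
    using assms(1) by (simp add: sum.inter_filter sum.swap[of _ "{..<n}"])
  also have "\<dots> = (\<Sum>k\<in>K. of_nat (N k) * g k)"
  proof (rule sum.cong[OF refl])
    fix k assume "k \<in> K"
    then have "{..<n} \<inter> {j. j < N k} = {..<N k}"
      using assms(2)[of k] by auto
    then show "(\<Sum>j<n. if j < N k then g k else 0) = of_nat (N k) * g k"
      by (simp add: sum.If_cases)
  qed
  finally show ?thesis .
qed

lemma top_segment_subset_upward_closed:
  assumes upward: "\<And>i k. i \<le> k \<Longrightarrow> k < l \<Longrightarrow> P i \<Longrightarrow> P k"
  shows "{l - card {k\<in>{..<l}. P k}..<l} \<subseteq> {k\<in>{..<l}. P k}"
proof
  let ?U = "{k\<in>{..<l}. P k}"
  fix k assume k: "k \<in> {l - card ?U..<l}"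
  show "k \<in> ?U"
  proof (rule ccontr)
    assume "k \<notin> ?U"
    then have "?U \<subseteq> {Suc k..<l}"
      using upward[of _ k] k by (auto simp: not_less_eq_eq[symmetric])
    then have "card ?U \<le> l - Suc k"
      by (metis card_atLeastLessThan card_mono finite_atLeastLessThan)
    then show False
      using k by auto
  qed
qed

(* Bid j is placed just above e (l - c), where c = card {k < l. j < N k}; since N is
   monotone, that set consists of the top c ranks below l, so exactly N k bids reach rank k. *)
lemma ladder_bids:
  fixes e :: "nat \<Rightarrow> real" and N :: "nat \<Rightarrow> nat"
  assumes "l < n" "0 < \<epsilon>"
    and antimono: "\<And>i j. i \<le> j \<Longrightarrow> j < n \<Longrightarrow> e j \<le> e i"
    and nonneg: "\<And>k. k < n \<Longrightarrow> 0 \<le> e k"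
    and mono: "\<And>i j. i \<le> j \<Longrightarrow> j < l \<Longrightarrow> N i \<le> N j"
    and bounded: "\<And>k. k < l \<Longrightarrow> N k \<le> n"
  obtains a where "\<And>j. j < n \<Longrightarrow> 0 \<le> a j"
    "(\<Sum>j<n. a j) \<le> real n * (e l + \<epsilon>) + (\<Sum>k<l. real (N k) * (e k - e (Suc k)))"
    "real (n * (n - l) + (\<Sum>k<l. N k)) \<le> (\<Sum>j<n. \<Sum>k<n. win_A (a j) (e k))"
proof -
  define up where "up j = {k\<in>{..<l}. j < N k}" for j
  define a where "a j = e (l - card (up j)) + \<epsilon>" for j
  have card_up: "card (up j) \<le> l" for j
    unfolding up_def using card_mono[of "{..<l}" "{k\<in>{..<l}. j < N k}"] by auto
  have top: "{l - card (up j)..<l} \<subseteq> up j" for j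
    unfolding up_def
    by (rule top_segment_subset_upward_closed) (use mono order.strict_trans2 in blast)
  have step_nonneg: "0 \<le> e k - e (Suc k)" if "k < l" for k
    using antimono[of k "Suc k"] that \<open>l < n\<close> by simp
  have bid_le: "a j \<le> e l + \<epsilon> + (\<Sum>k\<in>up j. e k - e (Suc k))" for j
  proof -
    have "e (l - card (up j)) = e l + (\<Sum>k\<in>{l - card (up j)..<l}. e k - e (Suc k))"
      using sum_Suc_diff'[of "l - card (up j)" l "\<lambda>k. - e k"] by (simp add: sum_negf)
    also have "\<dots> \<le> e l + (\<Sum>k\<in>up j. e k - e (Suc k))"
      using top step_nonneg by (intro add_left_mono sum_mono2) (auto simp: up_def)
    finally show ?thesis
      unfolding a_def by simp
  qed
  show ?thesis
  proof
    show "0 \<le> a j" if "j < n" for j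
      unfolding a_def using nonneg[of "l - card (up j)"] \<open>l < n\<close> \<open>0 < \<epsilon>\<close> by simp
    have "(\<Sum>j<n. \<Sum>k\<in>up j. e k - e (Suc k)) = (\<Sum>k<l. real (N k) * (e k - e (Suc k)))"
      unfolding up_def by (rule sum_sum_filter_less_swap) (simp_all add: bounded)
    then have "(\<Sum>j<n. e l + \<epsilon> + (\<Sum>k\<in>up j. e k - e (Suc k)))
        = real n * (e l + \<epsilon>) + (\<Sum>k<l. real (N k) * (e k - e (Suc k)))"
      by (simp add: sum.distrib)
    moreover have "(\<Sum>j<n. a j) \<le> (\<Sum>j<n. e l + \<epsilon> + (\<Sum>k\<in>up j. e k - e (Suc k)))"
      by (intro sum_mono bid_le)
    ultimately show "(\<Sum>j<n. a j) \<le> real n * (e l + \<epsilon>) + (\<Sum>k<l. real (N k) * (e k - e (Suc k)))"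
      by simp
    have "(\<Sum>j<n. card (up j)) = (\<Sum>k<l. N k)"
      using sum_sum_filter_less_swap[of "{..<l}" N n "\<lambda>_. 1::nat"] bounded by (simp add: up_def)
    moreover have "n - (l - card (up j)) = (n - l) + card (up j)" for j
      using card_up[of j] \<open>l < n\<close> by simp
    ultimately have "n * (n - l) + (\<Sum>k<l. N k) = (\<Sum>j<n. n - (l - card (up j)))"
      by (simp add: sum.distrib)
    then have "real (n * (n - l) + (\<Sum>k<l. N k)) = (\<Sum>j<n. real (n - (l - card (up j))))"
      by (metis of_nat_sum)
    also have "\<dots> \<le> (\<Sum>j<n. \<Sum>k<n. win_A (a j) (e k))"
      using win_count_above[OF antimono] \<open>0 < \<epsilon>\<close> by (intro sum_mono) (simp add: a_def)
    finally show "real (n * (n - l) + (\<Sum>k<l. N k)) \<le> (\<Sum>j<n. \<Sum>k<n. win_A (a j) (e k))" .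
  qed
qed

lemma sum_Suc_times_diff:
  fixes e :: "nat \<Rightarrow> real"
  shows "(\<Sum>k<l. real (Suc k) * (e k - e (Suc k))) = (\<Sum>k<l. e k) - real l * e l"
  by (induction l) (auto simp: algebra_simps)

lemma staircase_cost_le:
  fixes e :: "nat \<Rightarrow> real"
  assumes "l < n" and nonneg: "\<And>k. k < n \<Longrightarrow> 0 \<le> e k" and budget: "(\<Sum>k<n. e k) \<le> \<beta>"
    and "0 \<le> r" "real n \<le> r * (real l + 1)"
  shows "real n * e l + r * (\<Sum>k<l. real (Suc k) * (e k - e (Suc k))) \<le> r * \<beta>"
proof -
  have "(\<Sum>k<Suc l. e k) \<le> \<beta>"
    using sum_mono2[of "{..<n}" "{..<Suc l}" e] nonneg \<open>l < n\<close> budget by force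
  then have "r * ((\<Sum>k<l. e k) + e l) \<le> r * \<beta>"
    using \<open>0 \<le> r\<close> by (simp add: mult_left_mono)
  moreover have "(real n - r * (real l + 1)) * e l \<le> 0"
    using \<open>real n \<le> r * (real l + 1)\<close> nonneg[OF \<open>l < n\<close>] by (simp add: mult_nonpos_nonneg)
  ultimately show ?thesis
    unfolding sum_Suc_times_diff by (simp add: algebra_simps)
qed

lemma exists_winning_bids:
  fixes e :: "nat \<Rightarrow> real" and R \<beta> :: real and l m n :: nat
  assumes antimono: "\<And>i j. i \<le> j \<Longrightarrow> j < n \<Longrightarrow> e j \<le> e i"
    and nonneg: "\<And>k. k < n \<Longrightarrow> 0 \<le> e k" and budget: "(\<Sum>k<n. e k) \<le> \<beta>" and "0 < \<beta>"
    and "1 < R" and l: "R * real l \<le> real n" "real n < R * (real l + 1)"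
    and m: "real m < R * (real l * (real l + 1) / 2)" "R * (real l * (real l + 1) / 2) \<le> real m + 1"
  obtains a where "\<And>j. j < n \<Longrightarrow> 0 \<le> a j" "(\<Sum>j<n. a j) \<le> R * \<beta>"
    "real (n * (n - l) + m) \<le> (\<Sum>j<n. \<Sum>k<n. win_A (a j) (e k))"
proof -
  define T where "T = (\<Sum>k<l. real (Suc k))"
  have T: "T = real l * (real l + 1) / 2"
    unfolding T_def by (induction l) (auto simp: field_simps)
  have "0 < l"
    using m(1) by (cases l) auto
  then have "0 < T"
    unfolding T by simp
  have "real l < R * l"
    using \<open>1 < R\<close> \<open>0 < l\<close> by simp
  then have "l < n"
    using l(1) by linarith
  obtain r where r: "max (max 1 (real n / (real l + 1))) (real m / T) < r" "r < R"
  proof (rule dense[THEN exE])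
    show "max (max 1 (real n / (real l + 1))) (real m / T) < R"
      using \<open>1 < R\<close> l(2) m(1) \<open>0 < T\<close> unfolding T[symmetric]
      by (simp add: divide_less_eq mult.commute)
  qed (use that in blast)
  have "1 < r" "real n < r * (real l + 1)" "real m < r * T"
    using r \<open>0 < T\<close> by (simp_all add: divide_less_eq mult.commute)
  moreover have "r * T < real m + 1"
    using mult_strict_right_mono[OF r(2) \<open>0 < T\<close>] m(2) unfolding T by simp
  moreover have "0 \<le> e k - e (Suc k)" if "k < l" for k
    using antimono[of k "Suc k"] that \<open>l < n\<close> by simp
  ultimately obtain N where N_mono: "\<And>i j. i \<le> j \<Longrightarrow> j < l \<Longrightarrow> N i \<le> N j"
    and N_less: "\<And>k. k < l \<Longrightarrow> real (N k) < r * real (Suc k) + 1" and sum_N: "(\<Sum>k<l. N k) = m"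
    and cost_N: "(\<Sum>k<l. real (N k) * (e k - e (Suc k))) \<le> r * (\<Sum>k<l. real (Suc k) * (e k - e (Suc k)))"
    using exists_staircase_profile[of r m l "\<lambda>k. e k - e (Suc k)"] unfolding T_def by auto
  have N_le: "N k \<le> n" if "k < l" for k
  proof -
    have "r * real (Suc k) \<le> R * real l"
      using that \<open>1 < r\<close> r(2) by (intro mult_mono) auto
    then show ?thesis
      using N_less[OF that] l(1) by simp
  qed
  \<comment> \<open>the slack between r and R pays for lifting every bid by \<open>\<epsilon>\<close>, turning ties into wins\<close>
  define \<epsilon> where "\<epsilon> = (R - r) * \<beta> / n"
  have "0 < \<epsilon>"
    unfolding \<epsilon>_def using r(2) \<open>0 < \<beta>\<close> \<open>l < n\<close> by simp
  show ?thesis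
  proof (rule ladder_bids[where e=e and N=N and l=l and n=n and \<epsilon>=\<epsilon>])
    fix a
    assume a_nonneg: "\<And>j. j < n \<Longrightarrow> 0 \<le> a j"
      and cost_a: "(\<Sum>j<n. a j) \<le> real n * (e l + \<epsilon>) + (\<Sum>k<l. real (N k) * (e k - e (Suc k)))"
      and wins: "real (n * (n - l) + (\<Sum>k<l. N k)) \<le> (\<Sum>j<n. \<Sum>k<n. win_A (a j) (e k))"
    have "real n * \<epsilon> = (R - r) * \<beta>"
      using \<open>l < n\<close> unfolding \<epsilon>_def by simp
    then have "(\<Sum>j<n. a j) \<le> r * \<beta> + (R - r) * \<beta>"
      using cost_a cost_N staircase_cost_le[OF \<open>l < n\<close> nonneg budget, of r] \<open>1 < r\<close>
        \<open>real n < r * (real l + 1)\<close> by (simp add: distrib_left)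
    then show thesis
      using that[OF a_nonneg] wins sum_N by (simp add: algebra_simps)
  qed (use \<open>l < n\<close> \<open>0 < \<epsilon>\<close> antimono nonneg N_mono N_le in auto)
qed

lemma nat_floor_divide_bounds:
  fixes R :: real
  assumes "1 < R" "R \<le> real n"
  defines "l \<equiv> nat \<lfloor>real n / R\<rfloor>"
  shows "0 < l" "l < n" "R * real l \<le> real n" "real n < R * (real l + 1)"
proof -
  have "1 \<le> real n / R"
    using assms(1,2) by (simp add: field_simps)
  then have "real l \<le> real n / R" "real n / R < real l + 1" "0 < l"
    unfolding l_def by (auto simp: of_nat_nat le_nat_floor)
  then show "0 < l" "R * real l \<le> real n" "real n < R * (real l + 1)"
    using \<open>1 < R\<close> by (auto simp: field_simps)
  moreover have "real l < R * real l"
    using \<open>1 < R\<close> \<open>0 < l\<close> by simp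
  ultimately show "l < n"
    by linarith
qed

lemma ceiling_minus_one_bounds:
  fixes x :: real
  assumes "0 < x"
  shows "real (nat (\<lceil>x\<rceil> - 1)) < x" "x \<le> real (nat (\<lceil>x\<rceil> - 1)) + 1"
proof -
  have "real (nat (\<lceil>x\<rceil> - 1)) = of_int \<lceil>x\<rceil> - 1"
    using assms by (simp add: one_le_ceiling)
  then show "real (nat (\<lceil>x\<rceil> - 1)) < x" "x \<le> real (nat (\<lceil>x\<rceil> - 1)) + 1"
    using ceiling_correct[of x] by linarith+
qed

(* For l = 0 the definition divides by zero, so R_l R 0 = 0. *)
lemma f_val_eq:
  assumes "0 < l" "0 < R"
  shows "f_val n R l = real n - real l + real (nat (\<lceil>R * (real l * (real l + 1) / 2)\<rceil> - 1)) / real n"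
proof -
  define c where "c = \<lceil>R * (real l * (real l + 1) / 2)\<rceil>"
  have "R / (2 / (real l * (real l + 1))) = R * (real l * (real l + 1) / 2)"
    by simp
  then have "R_l R l = 2 / (real l * (real l + 1)) * (of_int c - 1)"
    unfolding R_l_def less_def c_def by presburger
  then have scaled: "real l * (real l + 1) * R_l R l / 2 = of_int c - 1"
    using assms(1) by simp
  have "0 < c"
    unfolding c_def using assms by simp
  then have "of_int c - 1 = real (nat (c - 1))"
    by simp
  moreover have "f_val n R l = real n - real l + real l * (real l + 1) * R_l R l / 2 / real n"
    unfolding f_val_def by (simp add: mult.commute)
  ultimately show ?thesis
    unfolding scaled c_def by simp
qed

theorem lemma7:
  fixes n :: nat and R \<beta> :: real and BD :: "real multiset"
  assumes "n \<ge> 1" and "\<beta> > 0" and "1 < R" and "R \<le> real n"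
    and "size BD = n" and "\<forall>x \<in># BD. 0 \<le> x" and "sum_mset BD = \<beta>"
  shows "W n R \<beta> pi_unif BD \<ge> f_val n R (min n (nat \<lfloor>real n / R\<rfloor>))"
proof -
  define l where "l = nat \<lfloor>real n / R\<rfloor>"
  define m where "m = nat (\<lceil>R * (real l * (real l + 1) / 2)\<rceil> - 1)"
  have l: "0 < l" "l < n" "R * real l \<le> real n" "real n < R * (real l + 1)"
    unfolding l_def using nat_floor_divide_bounds[OF \<open>1 < R\<close> \<open>R \<le> real n\<close>] by auto
  have "0 < R * (real l * (real l + 1) / 2)"
    using \<open>1 < R\<close> \<open>0 < l\<close> by simp
  then have m: "real m < R * (real l * (real l + 1) / 2)" "R * (real l * (real l + 1) / 2) \<le> real m + 1"
    unfolding m_def by (rule ceiling_minus_one_bounds)+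
  obtain e where BD: "mset (map e [0..<n]) = BD" and antimono: "\<And>i j. i \<le> j \<Longrightarrow> j < n \<Longrightarrow> e j \<le> e i"
    using obtain_antimono_enumeration[of BD] assms(5) by blast
  have nonneg: "0 \<le> e k" if "k < n" for k
    using assms(6) that unfolding BD[symmetric] by simp
  have budget: "(\<Sum>k<n. e k) \<le> \<beta>"
    using sum_mset_mset_eq_sum_nth[of "\<lambda>x. x" "map e [0..<n]"] BD assms(7) by simp
  obtain a where a_nonneg: "\<And>j. j < n \<Longrightarrow> 0 \<le> a j" and a_budget: "(\<Sum>j<n. a j) \<le> R * \<beta>"
    and wins: "real (n * (n - l) + m) \<le> (\<Sum>j<n. \<Sum>k<n. win_A (a j) (e k))"
    by (rule exists_winning_bids[where e=e and n=n and l=l and m=m and R=R and \<beta>=\<beta>])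
      (use antimono nonneg budget assms(2,3) l m in auto)
  have "real n * f_val n R (min n (nat \<lfloor>real n / R\<rfloor>)) = real (n * (n - l) + m)"
    using f_val_eq[OF \<open>0 < l\<close>, of R n] \<open>1 < R\<close> \<open>l < n\<close> \<open>n \<ge> 1\<close> unfolding l_def[symmetric] m_def
    by (simp add: field_simps of_nat_diff)
  also have "\<dots> \<le> (\<Sum>j<n. \<Sum>k<n. win_A (a j) (e k))"
    by (rule wins)
  also have "\<dots> \<le> real n * W n R \<beta> pi_unif BD"
    by (rule W_pi_unif_ge_bid_vector[OF BD a_nonneg a_budget])
  finally show ?thesis
    using \<open>n \<ge> 1\<close> by simp
qed

end
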